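(* Let $(X,d)$ be a proper metric space, $f:X\to X$ continuous, $x_0\in X$ and $1\le p<\infty$. Then the push-forward $f_*\mu=\mu\circ f^{-1}$ maps $\mathcal P_p(X)$ into itself and is continuous with respect to $w_p$ if and only if \[ \sup_{x\in X}\frac{d(f(x),x_0)}{1+d(x,x_0)}<\infty. \]
   Context: A metric space is proper if closed bounded sets are compact. $\mathcal P_p(X)$ is the set of Borel probability measures with finite $p$-th moment $\int d(x,x_0)^p\,d\mu<\infty$. It carries the $L^p$-Wasserstein distance \[ w_p(\mu,\nu)=\Big(\inf_{\pi\in\Pi(\mu,\nu)}\int d(x,y)^p\,d\pi\Big)^{1/p}. \] *)

theory Defs
  imports "HOL-Probability.Probability"
begin

definition proper_space :: "'a::metric_space itself \<Rightarrow> bool" where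
  "proper_space _ \<longleftrightarrow> (\<forall>S::'a set. closed S \<and> bounded S \<longrightarrow> compact S)"

definition Pp :: "real \<Rightarrow> 'a::metric_space \<Rightarrow> 'a measure set" where
  "Pp p x0 = {\<mu>. sets \<mu> = sets borel \<and> prob_space \<mu> \<and>
      (\<integral>\<^sup>+ x. ennreal (dist x x0 powr p) \<partial>\<mu>) < \<infinity>}"

definition couplings :: "'a::metric_space measure \<Rightarrow> 'a measure \<Rightarrow> ('a \<times> 'a) measure set" where
  "couplings \<mu> \<nu> = {\<pi>. sets \<pi> = sets borel \<and> prob_space \<pi> \<and>
      distr \<pi> borel fst = \<mu> \<and> distr \<pi> borel snd = \<nu>}"

definition wasserstein :: "real \<Rightarrow> 'a::metric_space measure \<Rightarrow> 'a measure \<Rightarrow> real" where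
  "wasserstein p \<mu> \<nu> =
     (enn2real (INF \<pi>\<in>couplings \<mu> \<nu>. \<integral>\<^sup>+ z. ennreal (dist (fst z) (snd z) powr p) \<partial>\<pi>)) powr (1 / p)"

end

theory Submission
  imports Defs
begin

text \<open>
  Affine growth gives \<open>d(f x, x\<^sub>0)\<^sup>p \<le> C\<^sup>p (1 + d(x, x\<^sub>0))\<^sup>p\<close>, so \<open>f\<^sub>* \<mu>\<close> stays in \<open>Pp\<close>.
  For continuity at \<open>\<mu>\<close> we bound \<open>d(f x, f y)\<^sup>p\<close> by a small constant, plus a tail term in \<open>x\<close> that is
  \<open>\<mu>\<close>-small (uniform continuity on a large compact ball handles the rest), plus \<open>K d(x, y)\<^sup>p\<close>.
  Integrating against an almost optimal coupling of \<open>\<mu>, \<nu>\<close>, pushed forward along \<open>f \<times> f\<close>, bounds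
  \<open>w\<^sub>p(f\<^sub>* \<mu>, f\<^sub>* \<nu>)\<close>.  Properness is also what makes the product measure a (Borel) coupling, so
  that the infimum defining \<open>w\<^sub>p\<close> is over a non-empty set of finite costs.

  Without the growth bound a discrete measure on points \<open>x\<^sub>n\<close> with fast growing
  \<open>d(f x\<^sub>n, x\<^sub>0)\<close> has finite \<open>p\<close>-th moment while its image does not.
\<close>

lemma proper_compact_cball:
  assumes "proper_space TYPE('a::metric_space)"
  shows "compact (cball (z::'a) r)"
  using assms unfolding proper_space_def by auto

text \<open>A proper space is separable: finite \<open>1/(k+1)\<close>-nets of the balls \<open>cball z n\<close>
  together form a countable dense set.\<close>
lemma proper_countable_dense:
  assumes P: "proper_space TYPE('a::metric_space)"
  obtains D :: "'a::metric_space set" where "countable D" and "\<And>x e. 0 < e \<Longrightarrow> \<exists>a\<in>D. dist x a < e"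
proof -
  obtain z :: 'a where True by simp
  have "\<exists>N. finite N \<and> cball z (real n) \<subseteq> (\<Union>a\<in>N. ball a (1 / Suc k))" for n k
  proof -
    have "seq_compact (cball z (real n))"
      using proper_compact_cball[OF P] compact_imp_seq_compact by blast
    from seq_compact_imp_totally_bounded[OF this, rule_format, of "1 / Suc k"]
    show ?thesis by auto
  qed
  then obtain N where N: "\<And>n k. finite (N n k)"
    and cover: "\<And>n k. cball z (real n) \<subseteq> (\<Union>a\<in>N n k. ball a (1 / Suc k))"
    by metis
  show ?thesis
  proof
    show "countable (\<Union>n k. N n k)"
      using N by (intro countable_UN) (auto intro: countable_finite)
  next
    fix x :: 'a and e :: real
    assume "0 < e"
    then obtain k :: nat where k: "1 / Suc k < e" by (rule nat_approx_posE)
    obtain n :: nat where "dist z x \<le> n" using real_nat_ceiling_ge by blast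
    then obtain a where a: "a \<in> N n k" "dist a x < 1 / Suc k" using cover[of n k] by force
    then have "dist x a < e" using k by (simp add: dist_commute)
    with a show "\<exists>a\<in>(\<Union>n k. N n k). dist x a < e" by blast
  qed
qed

text \<open>Hence every open subset of \<open>X \<times> X\<close> is a countable union of open rectangles, namely of
  products of balls with centres in the dense set and radii \<open>1/(k+1)\<close>.\<close>
lemma proper_open_prod_countable_union:
  assumes P: "proper_space TYPE('a::metric_space)" and U: "open (U :: ('a \<times> 'a) set)"
  shows "\<exists>F. countable F \<and> F \<subseteq> {A \<times> B | A B. open A \<and> open B} \<and> U = \<Union>F"
proof -
  obtain D :: "'a set" where D: "countable D" and dense: "\<And>x e. 0 < e \<Longrightarrow> \<exists>a\<in>D. dist x a < e"
    using proper_countable_dense[OF P] by blast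
  define box where "box = (\<lambda>(a::'a, b::'a, k::nat). ball a (1 / Suc k) \<times> ball b (1 / Suc k))"
  define F where "F = box ` {t \<in> D \<times> D \<times> UNIV. box t \<subseteq> U}"
  have "countable (D \<times> D \<times> (UNIV :: nat set))"
    using D by (intro countable_SIGMA) auto
  then have "countable F"
    unfolding F_def by (intro countable_image) (rule countable_subset[rotated], auto)
  moreover have "F \<subseteq> {A \<times> B | A B. open A \<and> open B}"
    unfolding F_def box_def by auto
  moreover have "U \<subseteq> \<Union>F"
  proof
    fix w assume "w \<in> U"
    then obtain x y where w: "w = (x, y)" by (cases w)
    obtain A B where "open A" "open B" "w \<in> A \<times> B" "A \<times> B \<subseteq> U"
      using open_prod_elim[OF U \<open>w \<in> U\<close>] .
    then have AB: "open A" "open B" "x \<in> A" "y \<in> B" "A \<times> B \<subseteq> U" using w by auto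
    obtain e where e: "0 < e" "ball x e \<subseteq> A" "ball y e \<subseteq> B"
    proof -
      obtain e1 where "0 < e1" "ball x e1 \<subseteq> A" using \<open>open A\<close> \<open>x \<in> A\<close> by (rule openE)
      moreover obtain e2 where "0 < e2" "ball y e2 \<subseteq> B" using \<open>open B\<close> \<open>y \<in> B\<close> by (rule openE)
      ultimately show ?thesis by (intro that[of "min e1 e2"]) auto
    qed
    have "0 < e / 2" using e by simp
    then obtain k :: nat where k: "1 / Suc k < e / 2" by (rule nat_approx_posE)
    obtain a where a: "a \<in> D" "dist x a < 1 / Suc k" using dense[where x=x and e="1 / Suc k"] by auto
    obtain b where b: "b \<in> D" "dist y b < 1 / Suc k" using dense[where x=y and e="1 / Suc k"] by auto
    have small_ball: "ball c (1 / Suc k) \<subseteq> ball v e" if "dist v c < 1 / Suc k" for c v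
    proof
      fix u assume "u \<in> ball c (1 / Suc k)"
      then show "u \<in> ball v e" using that k dist_triangle[of v u c] by simp
    qed
    have "ball a (1 / Suc k) \<subseteq> ball x e" "ball b (1 / Suc k) \<subseteq> ball y e"
      using small_ball a b by auto
    then have "box (a, b, k) \<subseteq> A \<times> B" using e unfolding box_def by auto
    then have "box (a, b, k) \<subseteq> U" using AB by blast
    moreover have "w \<in> box (a, b, k)" using a b w unfolding box_def by (simp add: dist_commute)
    ultimately show "w \<in> \<Union>F" unfolding F_def using a b by blast
  qed
  moreover have "\<Union>F \<subseteq> U" unfolding F_def by auto
  ultimately show ?thesis by blast
qed

text \<open>On a proper space the Borel \<open>\<sigma>\<close>-algebra of \<open>X \<times> X\<close> is the product of the Borel
  \<open>\<sigma>\<close>-algebras, so product measures are Borel measures on \<open>X \<times> X\<close>.\<close>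
lemma sets_borel_prod_proper:
  assumes P: "proper_space TYPE('a::metric_space)"
  shows "sets (borel :: ('a \<times> 'a) measure) = sets (borel \<Otimes>\<^sub>M borel)"
proof
  show "sets (borel \<Otimes>\<^sub>M borel) \<subseteq> sets (borel :: ('a \<times> 'a) measure)"
  proof (rule sets_pair_in_sets)
    fix A B :: "'a set" assume "A \<in> sets borel" "B \<in> sets borel"
    have "fst -` A \<inter> snd -` B \<in> sets (borel :: ('a \<times> 'a) measure)"
      using \<open>A \<in> sets borel\<close> \<open>B \<in> sets borel\<close>
      by (intro sets.Int measurable_sets_borel[where M=borel] borel_measurable_continuous_onI continuous_intros)
    also have "fst -` A \<inter> snd -` B = A \<times> B" by auto
    finally show "A \<times> B \<in> sets borel" .
  qed
next
  show "sets (borel :: ('a \<times> 'a) measure) \<subseteq> sets (borel \<Otimes>\<^sub>M borel)"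
    unfolding sets_borel
  proof (rule sets.sigma_sets_subset')
    show "{U :: ('a \<times> 'a) set. open U} \<subseteq> sets (borel \<Otimes>\<^sub>M borel)"
    proof
      fix U :: "('a \<times> 'a) set" assume "U \<in> {U. open U}"
      then obtain F where F: "countable F" "F \<subseteq> {A \<times> B | A B. open A \<and> open B}" "U = \<Union>F"
        using proper_open_prod_countable_union[OF P] by blast
      have "F \<subseteq> sets (borel \<Otimes>\<^sub>M borel)" using F(2) by auto
      then show "U \<in> sets (borel \<Otimes>\<^sub>M borel)" using F(1,3) by (auto intro: sets.countable_Union)
    qed
  qed (metis sets.top space_borel space_pair_measure UNIV_Times_UNIV)
qed

lemma powr_add_le:
  fixes a b p :: real
  assumes "0 \<le> a" "0 \<le> b" "0 < p"
  shows "(a + b) powr p \<le> 2 powr p * (a powr p + b powr p)"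
proof -
  have "(a + b) powr p \<le> (2 * max a b) powr p"
    using assms by (intro powr_mono2) auto
  also have "\<dots> = 2 powr p * max a b powr p"
    using assms by (simp add: powr_mult)
  also have "max a b powr p \<le> a powr p + b powr p"
    by (cases "a \<le> b") (auto simp: max_def)
  then have "2 powr p * max a b powr p \<le> 2 powr p * (a powr p + b powr p)"
    by (intro mult_left_mono) auto
  finally show ?thesis .
qed

lemma powr_inverse_less_iff:
  fixes t e p :: real
  assumes t: "0 \<le> t" and p: "0 < p" and e: "0 < e"
  shows "t powr (1 / p) < e \<longleftrightarrow> t < e powr p"
proof -
  have t_eq: "t = (t powr (1 / p)) powr p"
    using t p by (cases "t = 0") (auto simp: powr_powr)
  have "a < e \<longleftrightarrow> a powr p < e powr p" if "0 \<le> a" for a :: real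
    using that p e powr_less_mono2[of p a e] powr_mono2[of p e a] by (auto simp: not_less[symmetric])
  from this[of "t powr (1 / p)"] show ?thesis by (simp flip: t_eq)
qed

lemma borel_measurable_dist_to [measurable]:
  "(\<lambda>x::'a::metric_space. dist x x0) \<in> borel_measurable borel"
  by (intro borel_measurable_continuous_onI continuous_intros)

lemma borel_measurable_dist_pair [measurable]:
  "(\<lambda>z::'a::metric_space \<times> 'a. dist (fst z) (snd z)) \<in> borel_measurable borel"
  by (intro borel_measurable_continuous_onI continuous_intros)

lemma Pp_shifted_moment:
  assumes mu: "\<mu> \<in> Pp p x0" and p: "0 < p" and K: "0 \<le> K"
  shows "(\<integral>\<^sup>+ x. ennreal (K * (1 + dist x x0) powr p) \<partial>\<mu>) < \<infinity>"
proof -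
  have s: "sets \<mu> = sets borel" and "prob_space \<mu>"
    and fin: "(\<integral>\<^sup>+ x. ennreal (dist x x0 powr p) \<partial>\<mu>) < \<infinity>"
    using mu unfolding Pp_def by auto
  interpret prob_space \<mu> by fact
  have moment_meas: "(\<lambda>x. ennreal (dist x x0 powr p)) \<in> borel_measurable \<mu>"
    unfolding measurable_cong_sets[OF s refl] by measurable
  have "(\<integral>\<^sup>+ x. ennreal (K * (1 + dist x x0) powr p) \<partial>\<mu>)
        \<le> (\<integral>\<^sup>+ x. ennreal (K * 2 powr p) * (1 + ennreal (dist x x0 powr p)) \<partial>\<mu>)"
  proof (intro nn_integral_mono)
    fix x
    have "(1 + dist x x0) powr p \<le> 2 powr p * (1 + dist x x0 powr p)"
      using powr_add_le[of 1 "dist x x0" p] p by simp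
    then have "K * (1 + dist x x0) powr p \<le> (K * 2 powr p) * (1 + dist x x0 powr p)"
      using K by (simp add: mult.assoc mult_left_mono)
    then have "ennreal (K * (1 + dist x x0) powr p) \<le> ennreal ((K * 2 powr p) * (1 + dist x x0 powr p))"
      by (rule ennreal_leI)
    also have "\<dots> = ennreal (K * 2 powr p) * ennreal (1 + dist x x0 powr p)"
      using K by (intro ennreal_mult) auto
    also have "ennreal (1 + dist x x0 powr p) = 1 + ennreal (dist x x0 powr p)"
      by (subst ennreal_plus) auto
    finally show "ennreal (K * (1 + dist x x0) powr p) \<le> ennreal (K * 2 powr p) * (1 + ennreal (dist x x0 powr p))" .
  qed
  also have "\<dots> = ennreal (K * 2 powr p) * (1 + (\<integral>\<^sup>+ x. ennreal (dist x x0 powr p) \<partial>\<mu>))"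
    using moment_meas by (simp add: nn_integral_cmult nn_integral_add emeasure_space_1)
  also have "\<dots> < \<infinity>" using fin by (simp add: ennreal_mult_less_top)
  finally show ?thesis .
qed

lemma distr_Pp_if_affine_growth:
  fixes f :: "'a::metric_space \<Rightarrow> 'a"
  assumes f: "f \<in> borel_measurable borel" and growth: "\<And>x. dist (f x) x0 \<le> C * (1 + dist x x0)"
    and C: "0 \<le> C" and p: "0 < p" and mu: "\<mu> \<in> Pp p x0"
  shows "distr \<mu> borel f \<in> Pp p x0"
proof -
  have s: "sets \<mu> = sets borel" and pr: "prob_space \<mu>" using mu unfolding Pp_def by auto
  have fm: "f \<in> measurable \<mu> borel" using f unfolding measurable_cong_sets[OF s refl] .
  have "(\<integral>\<^sup>+ y. ennreal (dist y x0 powr p) \<partial>distr \<mu> borel f) = (\<integral>\<^sup>+ x. ennreal (dist (f x) x0 powr p) \<partial>\<mu>)"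
    using fm by (subst nn_integral_distr) auto
  also have "\<dots> \<le> (\<integral>\<^sup>+ x. ennreal (C powr p * (1 + dist x x0) powr p) \<partial>\<mu>)"
  proof (intro nn_integral_mono ennreal_leI)
    fix x
    have "dist (f x) x0 powr p \<le> (C * (1 + dist x x0)) powr p" using growth C p by (intro powr_mono2) auto
    then show "dist (f x) x0 powr p \<le> C powr p * (1 + dist x x0) powr p" using C by (simp add: powr_mult)
  qed
  also have "\<dots> < \<infinity>" using Pp_shifted_moment[OF mu p] by simp
  finally have "(\<integral>\<^sup>+ y. ennreal (dist y x0 powr p) \<partial>distr \<mu> borel f) < \<infinity>" .
  moreover have "prob_space (distr \<mu> borel f)" using pr fm by (rule prob_space.prob_space_distr)
  ultimately show ?thesis unfolding Pp_def by auto
qed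

lemma nn_integral_tail_small:
  fixes h :: "'a::metric_space \<Rightarrow> real"
  assumes s: "sets \<mu> = sets borel" and h: "h \<in> borel_measurable borel" "\<And>x. 0 \<le> h x"
    and fin: "(\<integral>\<^sup>+ x. ennreal (h x) \<partial>\<mu>) < \<infinity>" and c: "0 < c"
  shows "\<exists>n::nat. (\<integral>\<^sup>+ x. ennreal (h x * indicator {x. real n < dist x x0} x) \<partial>\<mu>) < c"
proof -
  define F where "F = (\<lambda>(i::nat) x. ennreal (h x * indicator {x. real i < dist x x0} x))"
  have Fm: "F i \<in> borel_measurable \<mu>" for i
    unfolding F_def measurable_cong_sets[OF s refl] using h by measurable
  have dec: "AE x in \<mu>. F (Suc i) x \<le> F i x" for i
    unfolding F_def using h by (intro AE_I2 ennreal_leI mult_left_mono) (auto simp: indicator_def)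
  have F0: "(\<integral>\<^sup>+ x. F 0 x \<partial>\<mu>) < \<infinity>"
    using fin unfolding F_def
    by (rule le_less_trans[rotated]) (intro nn_integral_mono ennreal_leI, use h in \<open>auto simp: indicator_def\<close>)
  have lim0: "(INF i. F i x) = 0" for x
  proof -
    obtain i :: nat where "dist x x0 < real i" using reals_Archimedean2 by blast
    then have "F i x = 0" unfolding F_def by auto
    then show ?thesis by (metis INF_lower UNIV_I le_zero_eq)
  qed
  have "(INF i. integral\<^sup>N \<mu> (F i)) = (\<integral>\<^sup>+ x. (INF i. F i x) \<partial>\<mu>)"
    by (rule nn_integral_monotone_convergence_INF_AE'[symmetric, OF dec Fm F0])
  also have "\<dots> = 0" by (simp add: lim0)
  finally have "(INF i. integral\<^sup>N \<mu> (F i)) < c" using c by simp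
  then show ?thesis unfolding INF_less_iff F_def by auto
qed

definition transport_cost :: "real \<Rightarrow> ('a::metric_space \<times> 'a) measure \<Rightarrow> ennreal" where
  "transport_cost p \<pi> = (\<integral>\<^sup>+ z. ennreal (dist (fst z) (snd z) powr p) \<partial>\<pi>)"

lemma wasserstein_transport_cost:
  "wasserstein p \<mu> \<nu> = enn2real (INF \<pi>\<in>couplings \<mu> \<nu>. transport_cost p \<pi>) powr (1 / p)"
  unfolding wasserstein_def transport_cost_def ..

lemma coupling_measurable_cong:
  assumes "\<pi> \<in> couplings \<mu> \<nu>"
  shows "measurable \<pi> N = measurable borel N"
  using assms unfolding couplings_def by (intro measurable_cong_sets) auto

lemma coupling_marginals:
  assumes pi: "\<pi> \<in> couplings \<mu> \<nu>" and g: "g \<in> borel_measurable borel"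
  shows "(\<integral>\<^sup>+ z. g (fst z) \<partial>\<pi>) = (\<integral>\<^sup>+ x. g x \<partial>\<mu>)"
    and "(\<integral>\<^sup>+ z. g (snd z) \<partial>\<pi>) = (\<integral>\<^sup>+ x. g x \<partial>\<nu>)"
proof -
  have "fst \<in> measurable \<pi> borel" "snd \<in> measurable \<pi> borel"
    unfolding coupling_measurable_cong[OF pi] by (intro borel_measurable_continuous_onI continuous_intros)+
  moreover have "distr \<pi> borel fst = \<mu>" "distr \<pi> borel snd = \<nu>"
    using pi unfolding couplings_def by auto
  ultimately show "(\<integral>\<^sup>+ z. g (fst z) \<partial>\<pi>) = (\<integral>\<^sup>+ x. g x \<partial>\<mu>)"
    and "(\<integral>\<^sup>+ z. g (snd z) \<partial>\<pi>) = (\<integral>\<^sup>+ x. g x \<partial>\<nu>)"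
    using g by (auto simp: nn_integral_distr)
qed

text \<open>Between measures in \<open>Pp\<close> every coupling has finite cost, since
  \<open>d(x, y)\<^sup>p \<le> 2\<^sup>p (d(x, x\<^sub>0)\<^sup>p + d(y, x\<^sub>0)\<^sup>p)\<close>.\<close>
lemma transport_cost_finite:
  assumes mu: "\<mu> \<in> Pp p x0" and nu: "\<nu> \<in> Pp p x0" and pi: "\<pi> \<in> couplings \<mu> \<nu>" and p: "0 < p"
  shows "transport_cost p \<pi> < \<infinity>"
proof -
  have moment: "(\<lambda>x. ennreal (dist x x0 powr p)) \<in> borel_measurable borel" by measurable
  then have fst_meas: "(\<lambda>z. ennreal (dist (fst z) x0 powr p)) \<in> borel_measurable \<pi>"
    and snd_meas: "(\<lambda>z. ennreal (dist (snd z) x0 powr p)) \<in> borel_measurable \<pi>"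
    unfolding coupling_measurable_cong[OF pi]
    by (intro measurable_compose[OF _ moment] borel_measurable_continuous_onI continuous_intros)+
  have "transport_cost p \<pi> \<le> (\<integral>\<^sup>+ z. ennreal (2 powr p) *
          (ennreal (dist (fst z) x0 powr p) + ennreal (dist (snd z) x0 powr p)) \<partial>\<pi>)"
    unfolding transport_cost_def
  proof (intro nn_integral_mono)
    fix z :: "'a \<times> 'a"
    have "dist (fst z) (snd z) powr p \<le> (dist (fst z) x0 + dist (snd z) x0) powr p"
      using p dist_triangle3[of "fst z" "snd z" x0] by (intro powr_mono2) (auto simp: dist_commute)
    also have "\<dots> \<le> 2 powr p * (dist (fst z) x0 powr p + dist (snd z) x0 powr p)"
      using p by (intro powr_add_le) auto
    finally show "ennreal (dist (fst z) (snd z) powr p)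
        \<le> ennreal (2 powr p) * (ennreal (dist (fst z) x0 powr p) + ennreal (dist (snd z) x0 powr p))"
      by (simp add: ennreal_mult[symmetric] ennreal_plus[symmetric] del: ennreal_plus)
  qed
  also have "\<dots> = ennreal (2 powr p) * ((\<integral>\<^sup>+ x. ennreal (dist x x0 powr p) \<partial>\<mu>)
                                       + (\<integral>\<^sup>+ x. ennreal (dist x x0 powr p) \<partial>\<nu>))"
    using fst_meas snd_meas coupling_marginals[OF pi moment]
    by (simp add: nn_integral_cmult nn_integral_add)
  also have "\<dots> < \<infinity>" using mu nu unfolding Pp_def by (simp add: ennreal_mult_less_top)
  finally show ?thesis .
qed

text \<open>On a proper space the product measure is a coupling, so the infimum defining
  \<open>wasserstein\<close> ranges over a non-empty set of finite costs.\<close>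
lemma product_coupling:
  assumes P: "proper_space TYPE('a::metric_space)" and mu: "\<mu> \<in> Pp p (x0::'a)" and nu: "\<nu> \<in> Pp p x0"
  shows "\<mu> \<Otimes>\<^sub>M \<nu> \<in> couplings \<mu> \<nu>"
proof -
  have sm: "sets \<mu> = sets borel" and sn: "sets \<nu> = sets borel"
    and "prob_space \<mu>" "prob_space \<nu>"
    using mu nu unfolding Pp_def by auto
  interpret M: prob_space \<mu> by fact
  interpret N: prob_space \<nu> by fact
  interpret MN: pair_prob_space \<mu> \<nu> ..
  have "sets (\<mu> \<Otimes>\<^sub>M \<nu>) = sets (borel \<Otimes>\<^sub>M borel)" using sm sn by (rule sets_pair_measure_cong)
  also have "\<dots> = sets borel" using sets_borel_prod_proper[OF P] by simp
  finally have s: "sets (\<mu> \<Otimes>\<^sub>M \<nu>) = sets borel" .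
  have "distr (\<mu> \<Otimes>\<^sub>M \<nu>) borel fst = distr (\<mu> \<Otimes>\<^sub>M \<nu>) \<mu> fst"
    using sm by (intro distr_cong) auto
  also have "\<dots> = \<mu>" by (rule N.distr_pair_fst)
  finally have fst_marg: "distr (\<mu> \<Otimes>\<^sub>M \<nu>) borel fst = \<mu>" .
  have "distr (\<mu> \<Otimes>\<^sub>M \<nu>) borel snd = distr (\<mu> \<Otimes>\<^sub>M \<nu>) \<nu> snd"
    using sn by (intro distr_cong) auto
  also have "\<dots> = \<nu>"
  proof (rule measure_eqI)
    fix A assume "A \<in> sets (distr (\<mu> \<Otimes>\<^sub>M \<nu>) \<nu> snd)"
    then have A: "A \<in> sets \<nu>" by simp
    have "emeasure (distr (\<mu> \<Otimes>\<^sub>M \<nu>) \<nu> snd) A = emeasure (\<mu> \<Otimes>\<^sub>M \<nu>) (space \<mu> \<times> A)"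
      using A by (auto simp: emeasure_distr space_pair_measure dest: sets.sets_into_space
                       intro!: arg_cong2[where f=emeasure])
    also have "\<dots> = emeasure \<nu> A"
      using A by (simp add: N.emeasure_pair_measure_Times M.emeasure_space_1)
    finally show "emeasure (distr (\<mu> \<Otimes>\<^sub>M \<nu>) \<nu> snd) A = emeasure \<nu> A" .
  qed simp
  finally have snd_marg: "distr (\<mu> \<Otimes>\<^sub>M \<nu>) borel snd = \<nu>" .
  show ?thesis unfolding couplings_def using s fst_marg snd_marg MN.prob_space_axioms by auto
qed

lemma wasserstein_less_iff:
  assumes P: "proper_space TYPE('a::metric_space)" and mu: "\<mu> \<in> Pp p (x0::'a)" and nu: "\<nu> \<in> Pp p x0"
    and p: "0 < p" and e: "0 < e"
  shows "wasserstein p \<mu> \<nu> < e \<longleftrightarrow> (\<exists>\<pi>\<in>couplings \<mu> \<nu>. transport_cost p \<pi> < ennreal (e powr p))"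
proof -
  define I where "I = (INF \<pi>\<in>couplings \<mu> \<nu>. transport_cost p \<pi>)"
  have prod: "\<mu> \<Otimes>\<^sub>M \<nu> \<in> couplings \<mu> \<nu>" by (rule product_coupling[OF P mu nu])
  have "I \<le> transport_cost p (\<mu> \<Otimes>\<^sub>M \<nu>)" unfolding I_def using prod by (rule INF_lower)
  also have "\<dots> < \<infinity>" by (rule transport_cost_finite[OF mu nu prod p])
  finally obtain t where t: "I = ennreal t" "0 \<le> t" by (cases I) auto
  have "wasserstein p \<mu> \<nu> < e \<longleftrightarrow> t < e powr p"
    unfolding wasserstein_transport_cost I_def[symmetric] using t p e by (simp add: powr_inverse_less_iff)
  also have "\<dots> \<longleftrightarrow> I < ennreal (e powr p)" using t by (simp add: ennreal_less_iff)
  also have "\<dots> \<longleftrightarrow> (\<exists>\<pi>\<in>couplings \<mu> \<nu>. transport_cost p \<pi> < ennreal (e powr p))"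
    unfolding I_def by (rule INF_less_iff)
  finally show ?thesis .
qed

lemma push_coupling:
  fixes f :: "'a::metric_space \<Rightarrow> 'b::metric_space"
  assumes f: "continuous_on UNIV f" and pi: "\<pi> \<in> couplings \<mu> \<nu>"
  shows "distr \<pi> borel (map_prod f f) \<in> couplings (distr \<mu> borel f) (distr \<nu> borel f)"
    and "transport_cost p (distr \<pi> borel (map_prod f f))
         = (\<integral>\<^sup>+ z. ennreal (dist (f (fst z)) (f (snd z)) powr p) \<partial>\<pi>)"
proof -
  have pr: "prob_space \<pi>" and fst_marg: "distr \<pi> borel fst = \<mu>" and snd_marg: "distr \<pi> borel snd = \<nu>"
    using pi unfolding couplings_def by auto
  have fm: "f \<in> borel_measurable borel" using f by (rule borel_measurable_continuous_onI)
  have fst_meas: "fst \<in> borel_measurable borel" and snd_meas: "snd \<in> borel_measurable borel"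
    by (intro borel_measurable_continuous_onI continuous_intros)+
  have "continuous_on UNIV (\<lambda>z::'a \<times> 'a. (f (fst z), f (snd z)))"
    by (intro continuous_intros continuous_on_compose2[OF f]) auto
  then have hm: "map_prod f f \<in> measurable borel borel"
    by (simp add: map_prod_def case_prod_beta' borel_measurable_continuous_onI)
  then have hm\<pi>: "map_prod f f \<in> measurable \<pi> borel" unfolding coupling_measurable_cong[OF pi] .
  have marginal: "distr (distr \<pi> borel (map_prod f f)) borel g = distr (distr \<pi> borel g') borel f"
    if "g \<in> borel_measurable borel" "g' \<in> borel_measurable borel" "g \<circ> map_prod f f = f \<circ> g'" for g g'
    using that hm\<pi> fm unfolding coupling_measurable_cong[OF pi, symmetric]
    by (simp add: distr_distr)
  have "prob_space (distr \<pi> borel (map_prod f f))"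
    using pr hm\<pi> by (rule prob_space.prob_space_distr)
  then show "distr \<pi> borel (map_prod f f) \<in> couplings (distr \<mu> borel f) (distr \<nu> borel f)"
    unfolding couplings_def using marginal[OF fst_meas fst_meas] marginal[OF snd_meas snd_meas]
    by (simp add: fst_marg snd_marg comp_def)
  have "(\<lambda>z::'b \<times> 'b. ennreal (dist (fst z) (snd z) powr p)) \<in> borel_measurable borel" by measurable
  then show "transport_cost p (distr \<pi> borel (map_prod f f))
         = (\<integral>\<^sup>+ z. ennreal (dist (f (fst z)) (f (snd z)) powr p) \<partial>\<pi>)"
    unfolding transport_cost_def using hm\<pi> by (simp add: nn_integral_distr case_prod_beta)
qed

text \<open>Affine growth bounds the distance of images globally:
  \<open>d(f x, f y) \<le> C (2 (1 + d(x, x\<^sub>0)) + d(x, y))\<close>.\<close>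
lemma dist_powr_affine_growth:
  assumes growth: "\<And>x. dist (f x) x0 \<le> C * (1 + dist x x0)" and C: "0 \<le> C" and p: "0 < p"
  shows "dist (f x) (f y) powr p \<le> (4 * C) powr p * (1 + dist x x0) powr p + (4 * C) powr p * dist x y powr p"
proof -
  have "dist (f x) (f y) \<le> dist (f x) x0 + dist (f y) x0"
    using dist_triangle3[of "f x" "f y" x0] by (simp add: dist_commute)
  also have "\<dots> \<le> C * (1 + dist x x0) + C * (1 + dist y x0)" by (intro add_mono growth)
  also have "\<dots> \<le> C * (2 * (1 + dist x x0) + dist x y)"
  proof -
    have "dist y x0 \<le> dist x x0 + dist x y" using dist_triangle3[of y x0 x] by (simp add: dist_commute)
    then have "C * (1 + dist y x0) \<le> C * (1 + dist x x0 + dist x y)" using C by (intro mult_left_mono) auto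
    then show ?thesis by (simp add: algebra_simps)
  qed
  finally have "dist (f x) (f y) powr p \<le> (C * (2 * (1 + dist x x0) + dist x y)) powr p"
    using p by (intro powr_mono2) auto
  also have "\<dots> = C powr p * (2 * (1 + dist x x0) + dist x y) powr p" using C by (simp add: powr_mult)
  also have "\<dots> \<le> C powr p * (2 powr p * ((2 * (1 + dist x x0)) powr p + dist x y powr p))"
    using p by (intro mult_left_mono powr_add_le) auto
  also have "(2 * (1 + dist x x0)) powr p = 2 powr p * (1 + dist x x0) powr p"
    using powr_mult[of 2 "1 + dist x x0" p] by simp
  also have "C powr p * (2 powr p * (2 powr p * (1 + dist x x0) powr p + dist x y powr p))
      = (2 * 2 * C) powr p * (1 + dist x x0) powr p + (2 * C) powr p * dist x y powr p"
    using C powr_mult[of 2 2 p] by (simp add: powr_mult algebra_simps)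
  also have "(2 * C) powr p \<le> (4 * C) powr p" using C p by (intro powr_mono2) auto
  finally show ?thesis by (simp add: mult_right_mono)
qed

text \<open>Near the centre (\<open>d(x, x\<^sub>0) \<le> R\<close>) and for close points
  (\<open>d(x, y) < r\<close>) the images are \<open>\<epsilon>\<close>-close; far out a tail term depending on \<open>x\<close> only pays;
  for distant points \<open>d(x, y) \<ge> r\<close> the growth bound is absorbed by \<open>d(x, y)\<^sup>p\<close>.\<close>
lemma push_dist_estimate:
  assumes growth: "\<And>x. dist (f x) x0 \<le> C * (1 + dist x x0)" and C: "0 \<le> C" and p: "0 < p"
    and r: "0 < r" and R: "0 \<le> R" and \<epsilon>: "0 \<le> \<epsilon>"
    and local: "\<And>x y. dist x x0 \<le> R \<Longrightarrow> dist x y < r \<Longrightarrow> dist (f x) (f y) \<le> \<epsilon>"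
  shows "dist (f x) (f y) powr p \<le> \<epsilon> powr p
           + (4 * C) powr p * (1 + dist x x0) powr p * indicator {x. R < dist x x0} x
           + (4 * C) powr p * ((1 + R) powr p / r powr p + 1) * dist x y powr p"
    (is "_ \<le> _ + ?tail + ?K * _")
proof (cases "dist x x0 \<le> R \<and> dist x y < r")
  case True
  then have "dist (f x) (f y) powr p \<le> \<epsilon> powr p"
    using local \<epsilon> p by (intro powr_mono2) auto
  moreover have "0 \<le> ?tail" "0 \<le> ?K * dist x y powr p" using C r by auto
  ultimately show ?thesis by linarith
next
  case far: False
  define K where "K = (4 * C) powr p"
  have K: "0 \<le> K" unfolding K_def by simp
  have "K * (1 + dist x x0) powr p \<le> ?tail + K * (1 + R) powr p / r powr p * dist x y powr p"
  proof (cases "R < dist x x0")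
    case True
    then show ?thesis using K r unfolding K_def by simp
  next
    case False
    then have "r \<le> dist x y" using far by auto
    then have ratio: "1 \<le> dist x y powr p / r powr p" using r p by (simp add: powr_mono2)
    have "K * (1 + dist x x0) powr p \<le> K * (1 + R) powr p"
      using False K p by (intro mult_left_mono powr_mono2) auto
    also have "\<dots> \<le> K * (1 + R) powr p * (dist x y powr p / r powr p)"
      using ratio K by (metis mult_left_mono mult.right_neutral powr_ge_zero zero_le_mult_iff)
    finally show ?thesis using False unfolding K_def by simp
  qed
  then have "K * (1 + dist x x0) powr p + K * dist x y powr p \<le> ?tail + ?K * dist x y powr p"
    unfolding K_def by (simp add: algebra_simps)
  moreover have "0 \<le> \<epsilon> powr p" by simp
  ultimately show ?thesis using dist_powr_affine_growth[OF growth C p, of x y] unfolding K_def by linarith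
qed

text \<open>The radius comes from the tail
  estimate, the scale \<open>r\<close> from uniform continuity on a compact ball.\<close>
lemma push_cost_split:
  fixes f :: "'a::metric_space \<Rightarrow> 'a"
  assumes P: "proper_space TYPE('a)" and f: "continuous_on UNIV f"
    and growth: "\<And>x. dist (f x) x0 \<le> C * (1 + dist x x0)" and C: "0 \<le> C"
    and p: "0 < p" and mu: "\<mu> \<in> Pp p x0" and \<eta>: "0 < \<eta>"
  obtains T K where "T \<in> borel_measurable borel" "\<And>x. 0 \<le> T x"
    "(\<integral>\<^sup>+ x. ennreal (T x) \<partial>\<mu>) < ennreal \<eta>" "0 \<le> K"
    "\<And>x y. dist (f x) (f y) powr p \<le> \<eta> + T x + K * dist x y powr p"
proof -
  have s: "sets \<mu> = sets borel" using mu unfolding Pp_def by auto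
  define h where "h = (\<lambda>x. (4 * C) powr p * (1 + dist x x0) powr p)"
  have h: "h \<in> borel_measurable borel" "\<And>x. 0 \<le> h x" unfolding h_def by auto
  have "(\<integral>\<^sup>+ x. ennreal (h x) \<partial>\<mu>) < \<infinity>"
    unfolding h_def by (rule Pp_shifted_moment[OF mu p]) simp
  from nn_integral_tail_small[OF s h this, of "ennreal \<eta>" x0] \<eta>
  obtain n :: nat where tail: "(\<integral>\<^sup>+ x. ennreal (h x * indicator {x. real n < dist x x0} x) \<partial>\<mu>) < ennreal \<eta>"
    by auto
  define \<epsilon> where "\<epsilon> = \<eta> powr (1 / p)"
  have "compact (cball x0 (real n + 1))" by (rule proper_compact_cball[OF P])
  then have "uniformly_continuous_on (cball x0 (real n + 1)) f"
    using f by (intro compact_uniformly_continuous) (auto intro: continuous_on_subset)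
  moreover have "0 < \<epsilon>" unfolding \<epsilon>_def using \<eta> by simp
  ultimately obtain r0 where r0: "0 < r0"
    and uc: "\<And>x y. x \<in> cball x0 (real n + 1) \<Longrightarrow> y \<in> cball x0 (real n + 1) \<Longrightarrow> dist y x < r0
                   \<Longrightarrow> dist (f y) (f x) < \<epsilon>"
    unfolding uniformly_continuous_on_def by metis
  define r where "r = min r0 1"
  have r: "0 < r" unfolding r_def using r0 by simp
  have local: "dist (f x) (f y) \<le> \<epsilon>" if "dist x x0 \<le> real n" "dist x y < r" for x y
  proof -
    have "dist x0 y \<le> dist x0 x + dist x y" by (rule dist_triangle)
    then have "x \<in> cball x0 (real n + 1)" "y \<in> cball x0 (real n + 1)"
      using that r_def by (auto simp: dist_commute)
    then show ?thesis using uc[of x y] that r_def by (simp add: dist_commute)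
  qed
  define T where "T = (\<lambda>x. h x * indicator {x. real n < dist x x0} x)"
  define K where "K = (4 * C) powr p * ((1 + real n) powr p / r powr p + 1)"
  show ?thesis
  proof (rule that)
    show "T \<in> borel_measurable borel" unfolding T_def using h by measurable
    show "0 \<le> T x" for x unfolding T_def using h by simp
    show "(\<integral>\<^sup>+ x. ennreal (T x) \<partial>\<mu>) < ennreal \<eta>" unfolding T_def by (rule tail)
    show "0 \<le> K" unfolding K_def using r by simp
    have "\<epsilon> powr p = \<eta>" unfolding \<epsilon>_def using \<eta> p by (simp add: powr_powr)
    then show "dist (f x) (f y) powr p \<le> \<eta> + T x + K * dist x y powr p" for x y
      using push_dist_estimate[OF growth C p r _ _ local, where x=x and y=y] \<open>0 < \<epsilon>\<close>
      unfolding h_def T_def K_def by simp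
  qed
qed

lemma push_transport_cost_le:
  fixes f :: "'a::metric_space \<Rightarrow> 'b::metric_space"
  assumes f: "continuous_on UNIV f" and pi: "\<pi> \<in> couplings \<mu> \<nu>"
    and T: "T \<in> borel_measurable borel" "\<And>x. 0 \<le> T x" and K: "0 \<le> K" and \<eta>: "0 \<le> \<eta>"
    and pointwise: "\<And>x y. dist (f x) (f y) powr p \<le> \<eta> + T x + K * dist x y powr p"
  shows "transport_cost p (distr \<pi> borel (map_prod f f))
         \<le> ennreal \<eta> + (\<integral>\<^sup>+ x. ennreal (T x) \<partial>\<mu>) + ennreal K * transport_cost p \<pi>"
proof -
  have "prob_space \<pi>" using pi unfolding couplings_def by auto
  have T_meas: "(\<lambda>x. ennreal (T x)) \<in> borel_measurable borel" using T(1) by simp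
  then have T_fst: "(\<lambda>z. ennreal (T (fst z))) \<in> borel_measurable \<pi>"
    unfolding coupling_measurable_cong[OF pi]
    by (intro measurable_compose[OF _ T_meas] borel_measurable_continuous_onI continuous_intros)
  have dist_meas: "(\<lambda>z. ennreal (dist (fst z) (snd z) powr p)) \<in> borel_measurable \<pi>"
    unfolding coupling_measurable_cong[OF pi] by measurable
  have "transport_cost p (distr \<pi> borel (map_prod f f))
        = (\<integral>\<^sup>+ z. ennreal (dist (f (fst z)) (f (snd z)) powr p) \<partial>\<pi>)"
    by (rule push_coupling(2)[OF f pi])
  also have "\<dots> \<le> (\<integral>\<^sup>+ z. ennreal \<eta> + ennreal (T (fst z))
                            + ennreal K * ennreal (dist (fst z) (snd z) powr p) \<partial>\<pi>)"
  proof (intro nn_integral_mono)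
    fix z :: "'a \<times> 'a"
    have "ennreal (dist (f (fst z)) (f (snd z)) powr p)
          \<le> ennreal (\<eta> + T (fst z) + K * dist (fst z) (snd z) powr p)"
      using pointwise by (rule ennreal_leI)
    also have "\<dots> = ennreal \<eta> + ennreal (T (fst z)) + ennreal K * ennreal (dist (fst z) (snd z) powr p)"
      using \<eta> T K by (simp add: ennreal_mult)
    finally show "ennreal (dist (f (fst z)) (f (snd z)) powr p)
          \<le> ennreal \<eta> + ennreal (T (fst z)) + ennreal K * ennreal (dist (fst z) (snd z) powr p)" .
  qed
  also have "\<dots> = ennreal \<eta> + (\<integral>\<^sup>+ x. ennreal (T x) \<partial>\<mu>) + ennreal K * transport_cost p \<pi>"
    using T_fst dist_meas coupling_marginals(1)[OF pi T_meas]
    unfolding transport_cost_def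
    by (simp add: nn_integral_add nn_integral_cmult prob_space.emeasure_space_1[OF \<open>prob_space \<pi>\<close>])
  finally show ?thesis .
qed

text \<open>Continuity of the push-forward at \<open>\<mu>\<close>: take a coupling of \<open>\<mu>, \<nu>\<close> of cost \<open>< \<delta>\<^sup>p\<close> and push it
  forward; by the cost splitting its cost becomes \<open>< e\<^sup>p\<close>.\<close>
lemma push_continuous:
  fixes f :: "'a::metric_space \<Rightarrow> 'a"
  assumes P: "proper_space TYPE('a)" and f: "continuous_on UNIV f"
    and growth: "\<And>x. dist (f x) x0 \<le> C * (1 + dist x x0)" and C: "0 \<le> C"
    and p: "0 < p" and mu: "\<mu> \<in> Pp p x0" and e: "0 < e"
  shows "\<exists>d>0. \<forall>\<nu>\<in>Pp p x0. wasserstein p \<mu> \<nu> < d \<longrightarrow>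
           wasserstein p (distr \<mu> borel f) (distr \<nu> borel f) < e"
proof -
  have fm: "f \<in> borel_measurable borel" using f by (rule borel_measurable_continuous_onI)
  define \<eta> where "\<eta> = e powr p / 3"
  have \<eta>: "0 < \<eta>" unfolding \<eta>_def using e by simp
  obtain T K where T: "T \<in> borel_measurable borel" "\<And>x. 0 \<le> T x"
    and T_small: "(\<integral>\<^sup>+ x. ennreal (T x) \<partial>\<mu>) < ennreal \<eta>" and K: "0 \<le> K"
    and pointwise: "\<And>x y. dist (f x) (f y) powr p \<le> \<eta> + T x + K * dist x y powr p"
    using push_cost_split[OF P f growth C p mu \<eta>] by blast
  define \<delta> where "\<delta> = (\<eta> / (K + 1)) powr (1 / p)"
  have \<delta>: "0 < \<delta>" unfolding \<delta>_def using \<eta> K by simp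
  have "K * \<delta> powr p = \<eta> * (K / (K + 1))"
    unfolding \<delta>_def using \<eta> K p by (simp add: powr_powr)
  also have "\<dots> \<le> \<eta>" using \<eta> K by (simp add: divide_le_eq)
  finally have K\<delta>: "K * \<delta> powr p \<le> \<eta>" .
  show ?thesis
  proof (intro exI[of _ \<delta>] conjI ballI impI \<delta>)
    fix \<nu> assume nu: "\<nu> \<in> Pp p x0" and close: "wasserstein p \<mu> \<nu> < \<delta>"
    obtain \<pi> where pi: "\<pi> \<in> couplings \<mu> \<nu>" and cost: "transport_cost p \<pi> < ennreal (\<delta> powr p)"
      using close wasserstein_less_iff[OF P mu nu p \<delta>] by blast
    have "transport_cost p (distr \<pi> borel (map_prod f f))
          \<le> ennreal \<eta> + (\<integral>\<^sup>+ x. ennreal (T x) \<partial>\<mu>) + ennreal K * transport_cost p \<pi>"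
      using push_transport_cost_le[OF f pi T K] \<eta> pointwise by simp
    also have "\<dots> < ennreal (e powr p)"
    proof -
      obtain a where a: "(\<integral>\<^sup>+ x. ennreal (T x) \<partial>\<mu>) = ennreal a" "0 \<le> a" "a < \<eta>"
        using T_small by (cases "\<integral>\<^sup>+ x. ennreal (T x) \<partial>\<mu>") (auto simp: ennreal_less_iff)
      obtain b where b: "transport_cost p \<pi> = ennreal b" "0 \<le> b" "b < \<delta> powr p"
        using cost by (cases "transport_cost p \<pi>") (auto simp: ennreal_less_iff)
      have "K * b \<le> \<eta>" using K b K\<delta> by (meson mult_left_mono order.strict_implies_order order_trans)
      then have "\<eta> + a + K * b < e powr p" using a unfolding \<eta>_def by simp
      then have "ennreal (\<eta> + a + K * b) < ennreal (e powr p)" using e by (intro ennreal_lessI) auto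
      then show ?thesis using a b K \<eta> by (simp add: ennreal_mult)
    qed
    finally have "transport_cost p (distr \<pi> borel (map_prod f f)) < ennreal (e powr p)" .
    moreover have "distr \<mu> borel f \<in> Pp p x0" "distr \<nu> borel f \<in> Pp p x0"
      using distr_Pp_if_affine_growth[OF fm growth C p] mu nu by auto
    ultimately show "wasserstein p (distr \<mu> borel f) (distr \<nu> borel f) < e"
      using wasserstein_less_iff[OF P _ _ p e] push_coupling(1)[OF f pi] by blast
  qed
qed

lemma nn_integral_half_powers:
  "(\<integral>\<^sup>+ n. ennreal ((1 / 2) ^ Suc n) \<partial>count_space UNIV) = 1"
  by (subst nn_integral_count_space_nat) (subst suminf_ennreal_eq[OF _ power_half_series], auto)

lemma pmf_geometric_mass:
  fixes A :: "nat \<Rightarrow> real"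
  assumes A: "\<And>n. 1 \<le> A n"
  obtains q :: "nat pmf" and s :: real where "0 < s" "\<And>n. pmf q n * A n = s * (1 / 2) ^ Suc n"
proof -
  define c where "c = (\<lambda>n. (1 / 2) ^ Suc n / A n)"
  have c_pos: "0 < c n" for n unfolding c_def using A[of n] by simp
  have c_le: "c n \<le> (1 / 2) ^ Suc n" for n unfolding c_def using A[of n] by (simp add: divide_le_eq_1 field_simps)
  define S where "S = (\<integral>\<^sup>+ n. ennreal (c n) \<partial>count_space UNIV)"
  have "S \<le> 1" unfolding S_def nn_integral_half_powers[symmetric]
    by (intro nn_integral_mono ennreal_leI c_le)
  moreover have "ennreal (c 0) \<le> S"
  proof -
    have "ennreal (c 0) = (\<Sum>n\<in>{0}. ennreal (c n))" by simp
    also have "\<dots> \<le> (\<Sum>n. ennreal (c n))" by (intro sum_le_suminf summableI) auto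
    also have "\<dots> = S" unfolding S_def by (rule nn_integral_count_space_nat[symmetric])
    finally show ?thesis .
  qed
  ultimately obtain t where t: "S = ennreal t" "0 < t" using c_pos[of 0]
    by (cases S) (auto simp: top_unique ennreal_le_iff2 intro: less_le_trans)
  define w where "w = (\<lambda>n. c n / t)"
  have w_nonneg: "0 \<le> w n" for n unfolding w_def using c_pos[of n] t by simp
  have "(\<integral>\<^sup>+ n. ennreal (w n) \<partial>count_space UNIV) = (\<integral>\<^sup>+ n. ennreal (c n) * ennreal (1 / t) \<partial>count_space UNIV)"
    unfolding w_def using c_pos t by (intro nn_integral_cong) (simp add: ennreal_mult[symmetric] less_imp_le)
  also have "\<dots> = S * ennreal (1 / t)" unfolding S_def by (rule nn_integral_multc) auto
  also have "\<dots> = 1" using t by (simp add: ennreal_mult[symmetric])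
  finally have "(\<integral>\<^sup>+ n. ennreal (w n) \<partial>count_space UNIV) = 1" .
  then have "pmf (embed_pmf w) n = w n" for n by (intro pmf_embed_pmf w_nonneg)
  moreover have "w n * A n = (1 / t) * (1 / 2) ^ Suc n" for n
    unfolding w_def c_def using A[of n] by (simp add: field_simps)
  ultimately show ?thesis using t by (intro that[of "1 / t" "embed_pmf w"]) auto
qed

lemma nn_integral_distr_pmf:
  fixes xs :: "'b \<Rightarrow> 'a::topological_space" and q :: "'b pmf"
  assumes "g \<in> borel_measurable borel"
  shows "(\<integral>\<^sup>+ y. g y \<partial>distr (measure_pmf q) borel xs)
         = (\<integral>\<^sup>+ n. ennreal (pmf q n) * g (xs n) \<partial>count_space UNIV)"
proof -
  have "xs \<in> measurable (measure_pmf q) borel" by simp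
  then have "(\<integral>\<^sup>+ y. g y \<partial>distr (measure_pmf q) borel xs) = (\<integral>\<^sup>+ n. g (xs n) \<partial>measure_pmf q)"
    by (rule nn_integral_distr) (use assms in simp)
  also have "\<dots> = (\<integral>\<^sup>+ n. ennreal (pmf q n) * g (xs n) \<partial>count_space UNIV)"
    by (rule nn_integral_measure_pmf)
  finally show ?thesis .
qed

lemma distr_pmf_in_Pp:
  fixes xs :: "nat \<Rightarrow> 'a::metric_space"
  assumes bound: "\<And>n. pmf q n * dist (xs n) x0 powr p \<le> s * (1 / 2) ^ Suc n" and s: "0 \<le> s"
  shows "distr (measure_pmf q) borel xs \<in> Pp p x0"
proof -
  have "(\<integral>\<^sup>+ y. ennreal (dist y x0 powr p) \<partial>distr (measure_pmf q) borel xs)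
        = (\<integral>\<^sup>+ n. ennreal (pmf q n) * ennreal (dist (xs n) x0 powr p) \<partial>count_space UNIV)"
    by (rule nn_integral_distr_pmf) measurable
  also have "\<dots> \<le> (\<integral>\<^sup>+ n. ennreal s * ennreal ((1 / 2) ^ Suc n) \<partial>count_space UNIV)"
    using bound s by (intro nn_integral_mono) (simp add: ennreal_mult[symmetric] ennreal_leI)
  also have "\<dots> = ennreal s * (\<integral>\<^sup>+ n. ennreal ((1 / 2) ^ Suc n) \<partial>count_space UNIV)"
    by (rule nn_integral_cmult) simp
  also have "\<dots> = ennreal s" by (simp only: nn_integral_half_powers mult_1_right)
  also have "\<dots> < \<infinity>" by simp
  finally have "(\<integral>\<^sup>+ y. ennreal (dist y x0 powr p) \<partial>distr (measure_pmf q) borel xs) < \<infinity>" .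
  moreover have "prob_space (distr (measure_pmf q) borel xs)"
    by (rule prob_space.prob_space_distr[OF prob_space_measure_pmf]) simp
  ultimately show ?thesis unfolding Pp_def by simp
qed

lemma distr_pmf_not_in_Pp:
  fixes ys :: "nat \<Rightarrow> 'a::metric_space"
  assumes bound: "\<And>n. c \<le> pmf q n * dist (ys n) x0 powr p" and c: "0 < c"
  shows "distr (measure_pmf q) borel ys \<notin> Pp p x0"
proof -
  have "\<infinity> = (\<integral>\<^sup>+ (n::nat). ennreal c \<partial>count_space UNIV)"
    using c by (simp add: ennreal_mult_top)
  also have "\<dots> \<le> (\<integral>\<^sup>+ n. ennreal (pmf q n) * ennreal (dist (ys n) x0 powr p) \<partial>count_space UNIV)"
    using bound by (intro nn_integral_mono) (simp add: ennreal_mult[symmetric] ennreal_leI)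
  also have "\<dots> = (\<integral>\<^sup>+ y. ennreal (dist y x0 powr p) \<partial>distr (measure_pmf q) borel ys)"
    by (rule nn_integral_distr_pmf[symmetric]) measurable
  finally show ?thesis unfolding Pp_def by (simp add: top_unique)
qed

text \<open>If \<open>f\<close> grows faster than affinely, pick \<open>x\<^sub>n\<close> with
  \<open>d(f x\<^sub>n, x\<^sub>0) > 2\<^sup>n (1 + d(x\<^sub>n, x\<^sub>0))\<close> and put mass \<open>\<sim> 2\<^sup>-\<^sup>n / (1 + d(x\<^sub>n, x\<^sub>0))\<^sup>p\<close> on \<open>x\<^sub>n\<close>:
  the resulting measure has finite \<open>p\<close>-th moment but its image under \<open>f\<close> does not (here \<open>p \<ge> 1\<close>).\<close>
lemma superaffine_growth_escapes_Pp:
  fixes f :: "'a::metric_space \<Rightarrow> 'a"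
  assumes f: "f \<in> borel_measurable borel" and p: "1 \<le> p"
    and unbounded: "\<not> bdd_above (range (\<lambda>x. dist (f x) x0 / (1 + dist x x0)))"
  shows "\<exists>\<mu>\<in>Pp p x0. distr \<mu> borel f \<notin> Pp p x0"
proof -
  have p0: "0 < p" using p by simp
  have "\<exists>x. 2 ^ n < dist (f x) x0 / (1 + dist x x0)" for n :: nat
  proof (rule ccontr)
    assume "\<nexists>x. 2 ^ n < dist (f x) x0 / (1 + dist x x0)"
    then have "bdd_above (range (\<lambda>x. dist (f x) x0 / (1 + dist x x0)))"
      by (intro bdd_above.I2[where M="2 ^ n"]) (auto simp: not_less)
    with unbounded show False by contradiction
  qed
  then obtain xs where "\<And>n. 2 ^ n < dist (f (xs n)) x0 / (1 + dist (xs n) x0)" by metis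
  then have xs: "2 ^ n * (1 + dist (xs n) x0) < dist (f (xs n)) x0" for n
    by (simp add: pos_less_divide_eq add_pos_nonneg)
  define A where "A = (\<lambda>n. (1 + dist (xs n) x0) powr p)"
  have A: "1 \<le> A n" for n unfolding A_def using p0 by (simp add: ge_one_powr_ge_zero)
  obtain q s where s: "0 < s" and mass: "\<And>n. pmf q n * A n = s * (1 / 2) ^ Suc n"
    using pmf_geometric_mass[of A] A by metis
  have "pmf q n * dist (xs n) x0 powr p \<le> s * (1 / 2) ^ Suc n" for n
    unfolding mass[of n, symmetric] A_def using p0 by (intro mult_left_mono powr_mono2) auto
  then have in_Pp: "distr (measure_pmf q) borel xs \<in> Pp p x0"
    using s by (intro distr_pmf_in_Pp) auto
  have "s / 2 \<le> pmf q n * dist ((f \<circ> xs) n) x0 powr p" for n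
  proof -
    have "2 ^ n * A n \<le> (2 ^ n) powr p * A n"
      using A[of n] powr_mono[of 1 p "2 ^ n :: real"] p by (intro mult_right_mono) auto
    also have "\<dots> = (2 ^ n * (1 + dist (xs n) x0)) powr p" unfolding A_def by (simp add: powr_mult)
    also have "\<dots> \<le> dist (f (xs n)) x0 powr p"
      using xs[of n] p0 by (intro powr_mono2) auto
    finally have "pmf q n * (2 ^ n * A n) \<le> pmf q n * dist (f (xs n)) x0 powr p"
      by (intro mult_left_mono) auto
    moreover have "pmf q n * (2 ^ n * A n) = s / 2"
      using mass[of n] by (simp add: power_one_over field_simps)
    ultimately show ?thesis by simp
  qed
  then have "distr (measure_pmf q) borel (f \<circ> xs) \<notin> Pp p x0"
    by (rule distr_pmf_not_in_Pp[where c="s / 2"]) (use s in simp)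
  moreover have "distr (measure_pmf q) borel (f \<circ> xs) = distr (distr (measure_pmf q) borel xs) borel f"
    using f by (intro distr_distr[symmetric]) simp_all
  ultimately show ?thesis using in_Pp by auto
qed

lemma affine_growth_if_bdd_ratio:
  assumes "bdd_above (range (\<lambda>x. dist (f x) x0 / (1 + dist x x0)))"
  obtains C where "0 \<le> C" "\<And>x. dist (f x) x0 \<le> C * (1 + dist x x0)"
proof -
  obtain M where M: "\<And>x. dist (f x) x0 / (1 + dist x x0) \<le> M"
    using assms by (auto simp: bdd_above_def)
  have "dist (f x) x0 \<le> max M 0 * (1 + dist x x0)" for x
  proof -
    have "dist (f x) x0 \<le> M * (1 + dist x x0)"
      using M[of x] by (simp add: divide_le_eq add_pos_nonneg mult.commute)
    also have "\<dots> \<le> max M 0 * (1 + dist x x0)" by (intro mult_right_mono) auto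
    finally show ?thesis .
  qed
  then show ?thesis by (intro that[of "max M 0"]) auto
qed

theorem mainTheorem5:
  fixes f :: "'a::metric_space \<Rightarrow> 'a" and x0 :: 'a and p :: real
  assumes "proper_space TYPE('a)"
    and "continuous_on UNIV f"
    and "1 \<le> p"
  shows "((\<forall>\<mu>\<in>Pp p x0. distr \<mu> borel f \<in> Pp p x0) \<and>
          (\<forall>\<mu>\<in>Pp p x0. \<forall>e>0. \<exists>d>0. \<forall>\<nu>\<in>Pp p x0.
              wasserstein p \<mu> \<nu> < d \<longrightarrow>
              wasserstein p (distr \<mu> borel f) (distr \<nu> borel f) < e))
     \<longleftrightarrow> bdd_above (range (\<lambda>x. dist (f x) x0 / (1 + dist x x0)))"
proof -
  have f_meas: "f \<in> borel_measurable borel" using assms(2) by (rule borel_measurable_continuous_onI)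
  have p: "0 < p" using assms(3) by simp
  show ?thesis
  proof
    assume "(\<forall>\<mu>\<in>Pp p x0. distr \<mu> borel f \<in> Pp p x0) \<and> (\<forall>\<mu>\<in>Pp p x0. \<forall>e>0. \<exists>d>0. \<forall>\<nu>\<in>Pp p x0.
              wasserstein p \<mu> \<nu> < d \<longrightarrow> wasserstein p (distr \<mu> borel f) (distr \<nu> borel f) < e)"
    then show "bdd_above (range (\<lambda>x. dist (f x) x0 / (1 + dist x x0)))"
      using superaffine_growth_escapes_Pp[OF f_meas assms(3)] by metis
  next
    assume "bdd_above (range (\<lambda>x. dist (f x) x0 / (1 + dist x x0)))"
    then obtain C where C: "0 \<le> C" and growth: "\<And>x. dist (f x) x0 \<le> C * (1 + dist x x0)"
      using affine_growth_if_bdd_ratio by blast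
    show "(\<forall>\<mu>\<in>Pp p x0. distr \<mu> borel f \<in> Pp p x0) \<and> (\<forall>\<mu>\<in>Pp p x0. \<forall>e>0. \<exists>d>0. \<forall>\<nu>\<in>Pp p x0.
              wasserstein p \<mu> \<nu> < d \<longrightarrow> wasserstein p (distr \<mu> borel f) (distr \<nu> borel f) < e)"
      using distr_Pp_if_affine_growth[OF f_meas growth C p]
        push_continuous[OF assms(1,2) growth C p] by blast
  qed
qed

end
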